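(* Let $U$ be a $d\times d$ unitary matrix. Then there exist a traceless Hermitian matrix $H$ and a phase $\phi\in\mathbb R$ such that $e^{-iH}=e^{i\phi}U$ (i.e. $d(U,e^{-iH})=0$), and moreover $\|H\|\le\pi\|I-U\|$ simultaneously for every unitarily invariant norm $\|\cdot\|$.
   Context: $d(U,V):=\min_{\phi\in\mathbb R}\|U-e^{i\phi}V\|$. A norm $\|\cdot\|$ on $d\times d$ matrices is unitarily invariant if $\|WAV\|=\|A\|$ for all unitaries $W,V$. *)

theory Defs
  imports "HOL-Analysis.Analysis"
begin

text \<open>d x d complex matrices are modelled as complex^'n^'n with d = CARD('n).\<close>

definition cmat_smult :: "complex \<Rightarrow> complex^'n^'m \<Rightarrow> complex^'n^'m" where
  "cmat_smult c A = (\<chi> i j. c * A $ i $ j)"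

definition cadjoint :: "complex^'n^'m \<Rightarrow> complex^'m^'n" where
  "cadjoint A = (\<chi> i j. cnj (A $ j $ i))"

definition cunitary :: "complex^'n^'n \<Rightarrow> bool" where
  "cunitary U \<longleftrightarrow> cadjoint U ** U = mat 1 \<and> U ** cadjoint U = mat 1"

definition chermitian :: "complex^'n^'n \<Rightarrow> bool" where
  "chermitian H \<longleftrightarrow> cadjoint H = H"

fun mpow :: "complex^'n^'n \<Rightarrow> nat \<Rightarrow> complex^'n^'n" where
  "mpow A 0 = mat 1"
| "mpow A (Suc k) = A ** mpow A k"

definition mexp :: "complex^'n^'n \<Rightarrow> complex^'n^'n" where
  "mexp A = (\<Sum>k. (1 / fact k) *\<^sub>R mpow A k)"

definition unitarily_invariant_norm :: "(complex^'n^'n \<Rightarrow> real) \<Rightarrow> bool" where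
  "unitarily_invariant_norm N \<longleftrightarrow>
     (\<forall>A. 0 \<le> N A) \<and>
     (\<forall>A. N A = 0 \<longleftrightarrow> A = 0) \<and>
     (\<forall>c A. N (cmat_smult c A) = cmod c * N A) \<and>
     (\<forall>A B. N (A + B) \<le> N A + N B) \<and>
     (\<forall>W V A. cunitary W \<and> cunitary V \<longrightarrow> N (W ** A ** V) = N A)"

end

theory Submission
  imports Defs "HOL-Computational_Algebra.Fundamental_Theorem_Algebra"
begin

(*
  Diagonalise U = W diag(e^(i t_j)) W^* with t_j in [-pi, pi] and put H = W diag(m - t_j) W^*,
  where m is the mean of the t_j. Then H is Hermitian and traceless and e^(-iH) = e^(-im) U.
  By unitary invariance it suffices to compare diag(m - t_j) with diag(1 - e^(i t_j)).
  Replacing every diagonal entry by the mean does not increase the norm, since the result is the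
  average of the conjugates of the diagonal by the cyclic permutation matrices; hence
  ||diag(m - t_j)|| <= 2 ||diag(t_j)||. Jordan's inequality gives |t| <= (pi/2) |1 - e^(it)| on
  [-pi, pi], and left multiplication by a diagonal matrix with entries of modulus at most r
  scales the norm by at most r, because that matrix is r/2 times a sum of two unitary diagonal
  matrices. So ||H|| <= pi ||diag(1 - e^(i t_j))|| = pi ||I - U||.

  The diagonalisation comes from a maximal orthonormal set of eigenvectors of U: its orthogonal
  complement is U-invariant, and factoring a polynomial that annihilates a vector y of the
  complement into linear factors produces an eigenvector among the vectors p(U) y.
*)

lemma two_div_pi_mult_le_sin:
  fixes x :: real
  assumes "0 \<le> x" "x \<le> pi / 2"
  shows "2 / pi * x \<le> sin x"
proof -
  have "concave_on {0..pi} sin"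
    by (rule f''_le0_imp_concave[where f' = cos and f'' = "\<lambda>x. - sin x"])
       (auto intro!: derivative_eq_intros sin_ge_zero)
  moreover define t where "t = 2 / pi * x"
  moreover have "0 \<le> t" "t \<le> 1" "t * (pi / 2) = x"
    using assms pi_gt_zero by (auto simp: t_def field_simps)
  ultimately show ?thesis
    using concave_onD[of "{0..pi}" sin t 0 "pi / 2"] pi_gt_zero by auto
qed

lemma abs_le_pi_half_mult_norm_one_minus_exp_i:
  fixes t :: real
  assumes "\<bar>t\<bar> \<le> pi"
  shows "\<bar>t\<bar> \<le> pi / 2 * cmod (1 - exp (\<i> * of_real t))"
proof -
  have "sin (\<bar>t\<bar> / 2) = \<bar>sin (t / 2)\<bar>"
    using assms sin_ge_zero[of "\<bar>t\<bar> / 2"] by (cases "0 \<le> t") auto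
  then have "\<bar>t\<bar> / pi \<le> \<bar>sin (t / 2)\<bar>"
    using two_div_pi_mult_le_sin[of "\<bar>t\<bar> / 2"] assms by simp
  then show ?thesis
    using dist_exp_i_1[of t] pi_gt_zero by (simp add: norm_minus_commute field_simps)
qed

lemma ex_unimodular_midpoint:
  fixes z :: complex
  assumes "cmod z \<le> r"
  shows "\<exists>u v. cmod u = 1 \<and> cmod v = 1 \<and> z = of_real r * (u + v) / 2"
proof -
  define a where "a = Arg z"
  define b where "b = arccos (cmod z / r)"
  have "cmod z = r * cos b"
  proof (cases "r = 0")
    case False
    then have "r > 0"
      using assms norm_ge_zero[of z] by linarith
    then have "0 \<le> cmod z / r" "cmod z / r \<le> 1"
      using assms by simp_all
    then have "cos b = cmod z / r"
      unfolding b_def by (intro cos_arccos) simp_all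
    then show ?thesis
      using \<open>r > 0\<close> by simp
  qed (use assms in simp)
  have "z = of_real (cmod z) * cis a"
    using rcis_cmod_Arg[of z] by (simp add: a_def rcis_def)
  also have "\<dots> = of_real r * (cis (a + b) + cis (a - b)) / 2"
    by (simp add: \<open>cmod z = r * cos b\<close> complex_eq_iff cos_add sin_add cos_diff sin_diff algebra_simps)
  finally show ?thesis
    using norm_cis by blast
qed

section \<open>Diagonal and unitary matrices\<close>

definition diagm :: "('n \<Rightarrow> complex) \<Rightarrow> complex^'n^'n" where
  "diagm a = (\<chi> i j. if i = j then a i else 0)"

lemma diagm_nth: "diagm a $ i $ j = (if i = j then a i else 0)"
  by (simp add: diagm_def)

lemma diagm_mult_nth: "(diagm a ** A) $ i $ j = a i * A $ i $ j"
proof -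
  have "\<And>k. (if i = k then a i else 0) * A $ k $ j = (if k = i then a i * A $ i $ j else 0)"
    by auto
  then show ?thesis
    by (simp add: diagm_def matrix_matrix_mult_def)
qed

lemma mult_diagm_nth: "(A ** diagm a) $ i $ j = A $ i $ j * a j"
proof -
  have "\<And>k. A $ i $ k * (if k = j then a k else 0) = (if k = j then A $ i $ j * a j else 0)"
    by auto
  then show ?thesis
    by (simp add: diagm_def matrix_matrix_mult_def)
qed

lemma diagm_mult_diagm: "diagm a ** diagm b = diagm (\<lambda>i. a i * b i)"
  by (simp add: vec_eq_iff diagm_mult_nth diagm_nth)

lemma diagm_1: "diagm (\<lambda>_. 1) = mat 1"
  by (simp add: vec_eq_iff diagm_nth mat_def)

lemma diagm_eq_iff: "diagm a = diagm b \<longleftrightarrow> a = b"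
proof
  assume "diagm a = diagm b"
  then have "diagm a $ i $ i = diagm b $ i $ i" for i
    by simp
  then show "a = b"
    by (simp add: diagm_nth fun_eq_iff)
qed simp

lemma diagm_sum: "(\<Sum>k\<in>S. diagm (f k)) = diagm (\<lambda>i. \<Sum>k\<in>S. f k i)"
  by (simp add: vec_eq_iff diagm_nth sum_component)

lemma cadjoint_diagm: "cadjoint (diagm a) = diagm (\<lambda>i. cnj (a i))"
  by (simp add: vec_eq_iff cadjoint_def diagm_nth)

lemma cadjoint_mult: "cadjoint (A ** B) = cadjoint B ** cadjoint (A :: complex^'n^'m)"
  by (simp add: vec_eq_iff cadjoint_def matrix_matrix_mult_def mult.commute)

lemma cadjoint_cadjoint [simp]: "cadjoint (cadjoint A) = A"
  by (simp add: vec_eq_iff cadjoint_def)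

lemma cadjoint_mat_1 [simp]: "cadjoint (mat 1 :: complex^'n^'n) = mat 1"
  by (simp add: vec_eq_iff cadjoint_def mat_def)

lemma cunitaryI_left: "cadjoint U ** U = mat 1 \<Longrightarrow> cunitary U"
  unfolding cunitary_def using matrix_left_right_inverse by blast

lemma cunitaryI_right: "U ** cadjoint U = mat 1 \<Longrightarrow> cunitary U"
  unfolding cunitary_def using matrix_left_right_inverse by blast

lemma cunitary_mat_1: "cunitary (mat 1)"
  by (simp add: cunitary_def)

lemma cunitary_cadjoint: "cunitary W \<Longrightarrow> cunitary (cadjoint W)"
  by (simp add: cunitary_def)

lemma cunitary_mult:
  assumes "cunitary W" "cunitary V"
  shows "cunitary (W ** V)"
proof (rule cunitaryI_left)
  have "cadjoint (W ** V) ** (W ** V) = cadjoint V ** (cadjoint W ** W) ** V"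
    by (simp add: cadjoint_mult matrix_mul_assoc)
  then show "cadjoint (W ** V) ** (W ** V) = mat 1"
    using assms by (simp add: cunitary_def)
qed

lemma cnj_mult_self_eq_1_iff: "cnj z * z = 1 \<longleftrightarrow> cmod z = 1"
proof -
  have "cnj z * z = of_real ((cmod z)\<^sup>2)"
    using complex_norm_square[of z] by (simp add: mult.commute)
  then have "cnj z * z = 1 \<longleftrightarrow> (cmod z)\<^sup>2 = 1"
    by (metis of_real_eq_1_iff)
  then show ?thesis
    using norm_ge_zero[of z] by (auto simp: power2_eq_1_iff)
qed

lemma cunitary_diagm_iff: "cunitary (diagm a) \<longleftrightarrow> (\<forall>i. cmod (a i) = 1)"
proof -
  have "cunitary (diagm a) \<longleftrightarrow> (\<lambda>i. cnj (a i) * a i) = (\<lambda>_. 1)"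
    by (simp add: cunitary_def cadjoint_diagm diagm_mult_diagm diagm_1[symmetric] diagm_eq_iff
        mult.commute)
  then show ?thesis
    by (simp add: fun_eq_iff cnj_mult_self_eq_1_iff)
qed

lemma conj_diagm_nth:
  "(W ** diagm b ** cadjoint W) $ i $ j = (\<Sum>l\<in>UNIV. W $ i $ l * cnj (W $ j $ l) * b l)"
  by (simp add: matrix_matrix_mult_def[of "W ** diagm b"] mult_diagm_nth cadjoint_def ac_simps)

lemma cmat_smult_conj_diagm:
  "cmat_smult c (W ** diagm a ** cadjoint W) = W ** diagm (\<lambda>j. c * a j) ** cadjoint W"
  by (simp add: vec_eq_iff cmat_smult_def conj_diagm_nth sum_distrib_left ac_simps)

lemma conj_diagm_diff:
  "W ** diagm a ** cadjoint W - W ** diagm b ** cadjoint W = W ** diagm (\<lambda>j. a j - b j) ** cadjoint W"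
  by (simp add: vec_eq_iff conj_diagm_nth algebra_simps sum_subtractf)

lemma mat_1_eq_conj_diagm_1: "cunitary W \<Longrightarrow> mat 1 = W ** diagm (\<lambda>_. 1) ** cadjoint W"
  by (simp add: cunitary_def diagm_1)

lemma chermitian_conj_diagm_real: "chermitian (W ** diagm (\<lambda>i. of_real (r i)) ** cadjoint W)"
  by (simp add: chermitian_def cadjoint_mult cadjoint_diagm matrix_mul_assoc)

lemma trace_conj_diagm:
  assumes "cunitary W"
  shows "trace (W ** diagm a ** cadjoint W) = (\<Sum>i\<in>UNIV. a i)"
proof -
  have "trace (W ** diagm a ** cadjoint W) = trace (diagm a ** cadjoint W ** W)"
    by (metis trace_mul_sym matrix_mul_assoc)
  also have "\<dots> = trace (diagm a)"
    using assms by (simp add: cunitary_def flip: matrix_mul_assoc)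
  finally show ?thesis
    by (simp add: trace_def diagm_nth)
qed

section \<open>Unitarily invariant norms of diagonal matrices\<close>

definition pmat :: "('n \<Rightarrow> 'n) \<Rightarrow> complex^'n^'n" where
  "pmat p = (\<chi> i j. if j = p i then 1 else 0)"

lemma pmat_mult_nth: "(pmat p ** A) $ i $ j = A $ p i $ j"
proof -
  have "\<And>k. (if k = p i then 1 else 0) * A $ k $ j = (if k = p i then A $ p i $ j else 0)"
    by auto
  then show ?thesis
    by (simp add: pmat_def matrix_matrix_mult_def)
qed

lemma mult_cadjoint_pmat_nth: "(A ** cadjoint (pmat p)) $ i $ j = A $ i $ p j"
proof -
  have "\<And>k. A $ i $ k * cnj (if k = p j then 1 else 0) = (if k = p j then A $ i $ p j else 0)"
    by auto
  then show ?thesis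
    by (simp add: pmat_def cadjoint_def matrix_matrix_mult_def)
qed

lemma pmat_conj_diagm: "inj p \<Longrightarrow> pmat p ** diagm a ** cadjoint (pmat p) = diagm (\<lambda>i. a (p i))"
  by (simp add: vec_eq_iff mult_cadjoint_pmat_nth pmat_mult_nth diagm_nth inj_eq)

lemma cunitary_pmat:
  assumes "inj p"
  shows "cunitary (pmat p)"
proof (rule cunitaryI_right)
  have "(pmat p ** cadjoint (pmat p)) $ i $ j = (if i = j then 1 else 0)" for i j
    using assms by (simp add: mult_cadjoint_pmat_nth) (simp add: pmat_def inj_eq)
  then show "pmat p ** cadjoint (pmat p) = mat 1"
    by (simp add: vec_eq_iff mat_def)
qed

lemma bij_betw_add_mod: "bij_betw (\<lambda>k. (c + k) mod d) {..<d} {..<d :: nat}"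
proof -
  have eq: "x = y" if "(c + x) mod d = (c + y) mod d" "x < d" "y \<le> x" for x y
  proof -
    have "d dvd x - y"
      using that mod_eq_dvd_iff_nat[of "c + y" "c + x" d] by simp
    then show ?thesis
      using that nat_dvd_not_less[of "x - y" d] by (cases "x = y") auto
  qed
  have "inj_on (\<lambda>k. (c + k) mod d) {..<d}"
  proof (rule inj_onI)
    fix x y
    assume "x \<in> {..<d}" "y \<in> {..<d}" "(c + x) mod d = (c + y) mod d"
    then show "x = y"
      using eq[of x y] eq[of y x] by (cases "y \<le> x") auto
  qed
  moreover have "(\<lambda>k. (c + k) mod d) ` {..<d} \<subseteq> {..<d}"
    by auto
  ultimately show ?thesis
    by (simp add: bij_betw_def endo_inj_surj)
qed

lemma ex_cyclic_shifts:
  "\<exists>p :: nat \<Rightarrow> 'n::finite \<Rightarrow> 'n.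
    (\<forall>k. inj (p k)) \<and> (\<forall>x. bij_betw (\<lambda>k. p k x) {..<CARD('n)} UNIV)"
proof -
  define d where "d = CARD('n)"
  obtain e where e: "bij_betw e {..<d} (UNIV :: 'n set)"
    using ex_bij_betw_nat_finite[of "UNIV :: 'n set"] by (auto simp: d_def lessThan_atLeast0)
  define e' where "e' = the_inv_into {..<d} e"
  have e': "bij_betw e' UNIV {..<d}"
    unfolding e'_def by (rule bij_betw_the_inv_into[OF e])
  define p where "p = (\<lambda>k x. e ((k + e' x) mod d))"
  have "bij_betw (p k) UNIV UNIV" for k
  proof -
    have "bij_betw (e \<circ> (\<lambda>j. (k + j) mod d) \<circ> e') UNIV UNIV"
      using e e' bij_betw_add_mod by (blast intro: bij_betw_trans)
    then show ?thesis
      by (simp add: p_def comp_def)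
  qed
  moreover have "bij_betw (\<lambda>k. p k x) {..<d} UNIV" for x
  proof -
    have "bij_betw (e \<circ> (\<lambda>k. (e' x + k) mod d)) {..<d} UNIV"
      using e bij_betw_add_mod by (blast intro: bij_betw_trans)
    then show ?thesis
      by (simp add: p_def comp_def add.commute)
  qed
  ultimately show ?thesis
    unfolding d_def bij_betw_def by blast
qed

context
  fixes N :: "complex^'n^'n \<Rightarrow> real"
  assumes N: "unitarily_invariant_norm N"
begin

lemma uinorm_zero [simp]: "N 0 = 0"
  using N by (simp add: unitarily_invariant_norm_def)

lemma uinorm_smult: "N (cmat_smult c A) = cmod c * N A"
  using N by (simp add: unitarily_invariant_norm_def)

lemma uinorm_add_le: "N (A + B) \<le> N A + N B"
  using N by (simp add: unitarily_invariant_norm_def)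

lemma uinorm_unitary_mult: "cunitary W \<Longrightarrow> cunitary V \<Longrightarrow> N (W ** A ** V) = N A"
  using N by (simp add: unitarily_invariant_norm_def)

lemma uinorm_unitary_mult_left: "cunitary W \<Longrightarrow> N (W ** A) = N A"
  using uinorm_unitary_mult[of W "mat 1" A] cunitary_mat_1 by simp

lemma uinorm_conj: "cunitary W \<Longrightarrow> N (W ** A ** cadjoint W) = N A"
  by (simp add: uinorm_unitary_mult cunitary_cadjoint)

lemma uinorm_diff_le: "N (A - B) \<le> N A + N B"
proof -
  have "N (A - B) = N (A + cmat_smult (- 1) B)"
    by (rule arg_cong[of _ _ N]) (simp add: vec_eq_iff cmat_smult_def)
  also have "\<dots> \<le> N A + N (cmat_smult (- 1) B)"
    by (rule uinorm_add_le)
  finally show ?thesis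
    by (simp add: uinorm_smult)
qed

lemma uinorm_sum_le: "N (\<Sum>k\<in>S. f k) \<le> (\<Sum>k\<in>S. N (f k))"
proof (induction S rule: infinite_finite_induct)
  case (insert x F)
  then show ?case
    using uinorm_add_le[of "f x" "sum f F"] by simp
qed simp_all

lemma uinorm_diagm_mult_le:
  assumes "\<And>i. cmod (c i) \<le> r"
  shows "N (diagm c ** A) \<le> r * N A"
proof -
  obtain u v where uv: "\<And>i. cmod (u i) = 1" "\<And>i. cmod (v i) = 1"
    "\<And>i. c i = of_real r * (u i + v i) / 2"
    using ex_unimodular_midpoint[OF assms] by metis
  have "r \<ge> 0"
    using assms norm_ge_zero order_trans by blast
  have eq: "diagm c ** A = cmat_smult (of_real (r / 2)) (diagm u ** A + diagm v ** A)"
    by (simp add: vec_eq_iff diagm_mult_nth cmat_smult_def uv(3) algebra_simps)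
  have "N (diagm c ** A) = r / 2 * N (diagm u ** A + diagm v ** A)"
    unfolding eq uinorm_smult using \<open>r \<ge> 0\<close> by simp
  also have "\<dots> \<le> r / 2 * (N (diagm u ** A) + N (diagm v ** A))"
    using \<open>r \<ge> 0\<close> uinorm_add_le by (simp add: mult_left_mono)
  also have "\<dots> = r * N A"
    using uv by (simp add: uinorm_unitary_mult_left cunitary_diagm_iff)
  finally show ?thesis .
qed

lemma uinorm_diagm_perm:
  assumes "inj p"
  shows "N (diagm (\<lambda>i. a (p i))) = N (diagm a)"
  using uinorm_conj[OF cunitary_pmat[OF assms], of "diagm a"] by (simp add: pmat_conj_diagm[OF assms])

lemma uinorm_diagm_mean_le: "N (diagm (\<lambda>_. (\<Sum>j\<in>UNIV. a j) / of_nat CARD('n))) \<le> N (diagm a)"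
proof -
  define d where "d = CARD('n)"
  define S where "S = (\<Sum>j\<in>UNIV. a j)"
  obtain p :: "nat \<Rightarrow> 'n \<Rightarrow> 'n"
    where p: "\<And>k. inj (p k)" "\<And>x. bij_betw (\<lambda>k. p k x) {..<d} UNIV"
    using ex_cyclic_shifts unfolding d_def by blast
  have "diagm (\<lambda>_. S) = (\<Sum>k<d. diagm (\<lambda>i. a (p k i)))"
    by (simp add: diagm_sum S_def sum.reindex_bij_betw[OF p(2)])
  then have "N (diagm (\<lambda>_. S)) \<le> (\<Sum>k<d. N (diagm (\<lambda>i. a (p k i))))"
    by (simp add: uinorm_sum_le)
  also have "\<dots> = real d * N (diagm a)"
    by (simp add: uinorm_diagm_perm[OF p(1)])
  finally have "N (diagm (\<lambda>_. S)) \<le> real d * N (diagm a)" .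
  moreover have "N (diagm (\<lambda>_. S / of_nat d)) = N (diagm (\<lambda>_. S)) / real d"
  proof -
    have eq: "diagm (\<lambda>_. S / of_nat d) = cmat_smult (1 / of_nat d) (diagm (\<lambda>_. S))"
      by (simp add: vec_eq_iff diagm_nth cmat_smult_def)
    show ?thesis
      unfolding eq uinorm_smult by (simp add: norm_divide)
  qed
  moreover have "d > 0"
    by (simp add: d_def)
  ultimately show ?thesis
    unfolding S_def[symmetric] d_def[symmetric] by (simp add: pos_divide_le_eq mult.commute)
qed

lemma uinorm_diagm_mean_minus_le:
  "N (diagm (\<lambda>i. (\<Sum>j\<in>UNIV. a j) / of_nat CARD('n) - a i)) \<le> 2 * N (diagm a)"
proof -
  have "diagm (\<lambda>i. (\<Sum>j\<in>UNIV. a j) / of_nat CARD('n) - a i)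
      = diagm (\<lambda>_. (\<Sum>j\<in>UNIV. a j) / of_nat CARD('n)) - diagm a"
    by (simp add: vec_eq_iff diagm_nth)
  then show ?thesis
    using uinorm_diff_le[of "diagm (\<lambda>_. (\<Sum>j\<in>UNIV. a j) / of_nat CARD('n))" "diagm a"]
      uinorm_diagm_mean_le[of a] by simp
qed

lemma uinorm_diagm_angle_le:
  assumes "\<And>i. \<bar>t i\<bar> \<le> pi"
  shows "N (diagm (\<lambda>i. of_real (t i))) \<le> pi / 2 * N (diagm (\<lambda>i. 1 - exp (\<i> * of_real (t i))))"
proof -
  define z where "z = (\<lambda>i. 1 - exp (\<i> * of_real (t i)))"
  define c where "c i = of_real (t i) / z i" for i
  have bound: "\<bar>t i\<bar> \<le> pi / 2 * cmod (z i)" for i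
    using abs_le_pi_half_mult_norm_one_minus_exp_i[OF assms] by (simp add: z_def)
  \<comment> \<open>where \<open>z i = 0\<close> the bound forces \<open>t i = 0\<close>, so the junk value \<open>c i = 0\<close>
    does no harm\<close>
  have "of_real (t i) = c i * z i" for i
    using bound[of i] by (cases "z i = 0") (simp_all add: c_def)
  then have "diagm (\<lambda>i. of_real (t i)) = diagm c ** diagm z"
    by (simp add: diagm_mult_diagm)
  moreover have "cmod (c i) \<le> pi / 2" for i
    using bound[of i] by (cases "z i = 0") (simp_all add: c_def norm_divide divide_le_eq)
  ultimately show ?thesis
    using uinorm_diagm_mult_le[of c "pi / 2" "diagm z"] by (simp add: z_def)
qed

lemma uinorm_conj_centered_angles_le:
  assumes W: "cunitary W" and t: "\<And>i. \<bar>t i\<bar> \<le> pi"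
  shows "N (W ** diagm (\<lambda>i. of_real ((\<Sum>j\<in>UNIV. t j) / CARD('n) - t i)) ** cadjoint W)
    \<le> pi * N (mat 1 - W ** diagm (\<lambda>i. exp (\<i> * of_real (t i))) ** cadjoint W)"
    (is "N (W ** diagm ?h ** cadjoint W) \<le> _")
proof -
  have "?h = (\<lambda>i. (\<Sum>j\<in>UNIV. of_real (t j)) / of_nat CARD('n) - of_real (t i))"
    by (simp add: fun_eq_iff)
  then have "N (diagm ?h) \<le> 2 * N (diagm (\<lambda>i. of_real (t i)))"
    using uinorm_diagm_mean_minus_le[of "\<lambda>i. of_real (t i)"] by simp
  also have "\<dots> \<le> pi * N (diagm (\<lambda>i. 1 - exp (\<i> * of_real (t i))))"
    using uinorm_diagm_angle_le[of t] t by simp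
  finally show ?thesis
    using W by (simp add: uinorm_conj mat_1_eq_conj_diagm_1 conj_diagm_diff)
qed

end

section \<open>Diagonalisation of unitary matrices\<close>

definition cinner :: "complex^'n \<Rightarrow> complex^'n \<Rightarrow> complex" where
  "cinner x y = (\<Sum>i\<in>UNIV. cnj (x $ i) * y $ i)"

lemma cinner_diff_right: "cinner x (y - z) = cinner x y - cinner x z"
  by (simp add: cinner_def algebra_simps sum_subtractf)

lemma cinner_scale_right: "cinner x (c *s y) = c * cinner x y"
  by (simp add: cinner_def sum_distrib_left algebra_simps)

lemma cinner_scale_left: "cinner (c *s x) y = cnj c * cinner x y"
  by (simp add: cinner_def sum_distrib_left algebra_simps)

lemma cinner_sum_right: "cinner x (\<Sum>k\<in>S. f k) = (\<Sum>k\<in>S. cinner x (f k))"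
  by (simp add: cinner_def sum_component sum_distrib_left) (rule sum.swap)

lemma cinner_commute: "cinner y x = cnj (cinner x y)"
  by (simp add: cinner_def mult.commute)

lemma cinner_self: "cinner x x = of_real (\<Sum>i\<in>UNIV. (cmod (x $ i))\<^sup>2)"
proof -
  have "cnj (x $ i) * x $ i = of_real ((cmod (x $ i))\<^sup>2)" for i
    using complex_norm_square[of "x $ i"] by (simp add: mult.commute)
  then show ?thesis
    by (simp add: cinner_def)
qed

lemma cinner_self_eq_0_iff: "cinner x x = 0 \<longleftrightarrow> x = 0"
proof -
  have "cinner x x = 0 \<longleftrightarrow> (\<Sum>i\<in>UNIV. (cmod (x $ i))\<^sup>2) = 0"
    unfolding cinner_self of_real_eq_0_iff ..
  also have "\<dots> \<longleftrightarrow> x = 0"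
    by (simp add: sum_nonneg_eq_0_iff vec_eq_iff)
  finally show ?thesis .
qed

lemma cinner_mult_vec_right: "cinner x (A *v y) = cinner (cadjoint A *v x) y"
proof -
  have "cinner x (A *v y) = (\<Sum>i\<in>UNIV. \<Sum>j\<in>UNIV. cnj (x $ i) * A $ i $ j * y $ j)"
    by (simp add: cinner_def matrix_vector_mult_def sum_distrib_left mult.assoc)
  also have "\<dots> = (\<Sum>j\<in>UNIV. \<Sum>i\<in>UNIV. cnj (x $ i) * A $ i $ j * y $ j)"
    by (rule sum.swap)
  also have "\<dots> = cinner (cadjoint A *v x) y"
    by (simp add: cinner_def matrix_vector_mult_def cadjoint_def sum_distrib_left sum_distrib_right
        ac_simps)
  finally show ?thesis .
qed

lemma ex_scale_cinner_self_eq_1: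
  assumes "x \<noteq> 0"
  shows "\<exists>c. cinner (c *s x) (c *s x) = 1"
proof -
  define r where "r = (\<Sum>i\<in>UNIV. (cmod (x $ i))\<^sup>2)"
  have xx: "cinner x x = of_real r"
    unfolding r_def by (rule cinner_self)
  have "r \<noteq> 0"
    using assms cinner_self_eq_0_iff[of x] xx by auto
  moreover have "r \<ge> 0"
    by (simp add: r_def sum_nonneg)
  ultimately have "1 / sqrt r * (1 / sqrt r) * r = 1"
    by (simp add: field_simps)
  moreover have "cinner (of_real (1 / sqrt r) *s x) (of_real (1 / sqrt r) *s x)
      = of_real (1 / sqrt r * (1 / sqrt r) * r)"
    by (simp only: cinner_scale_left cinner_scale_right xx complex_cnj_complex_of_real of_real_mult
        mult.assoc)
  ultimately show ?thesis
    by auto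
qed

definition corthonormal :: "(complex^'n) set \<Rightarrow> bool" where
  "corthonormal B \<longleftrightarrow>
     (\<forall>b\<in>B. cinner b b = 1) \<and> (\<forall>b\<in>B. \<forall>b'\<in>B. b \<noteq> b' \<longrightarrow> cinner b b' = 0)"

lemma corthonormal_independent:
  assumes "corthonormal B"
  shows "vec.independent B"
proof
  assume "vec.dependent B"
  then obtain T u v where T: "finite T" "T \<subseteq> B" "(\<Sum>w\<in>T. u w *s w) = 0"
    and v: "v \<in> T" "u v \<noteq> 0"
    unfolding vec.dependent_explicit by blast
  have "0 = cinner v (\<Sum>w\<in>T. u w *s w)"
    using T by (simp add: cinner_def)
  also have "\<dots> = (\<Sum>w\<in>T. cinner v (u w *s w))"
    by (rule cinner_sum_right)
  also have "\<dots> = (\<Sum>w\<in>T. if w = v then u v else 0)"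
  proof (rule sum.cong[OF refl])
    fix w
    assume "w \<in> T"
    then have "w \<in> B" "v \<in> B"
      using T(2) v(1) by auto
    then show "cinner v (u w *s w) = (if w = v then u v else 0)"
      using assms unfolding corthonormal_def by (auto simp: cinner_scale_right)
  qed
  also have "\<dots> = u v"
    using T v by simp
  finally show False
    using v by simp
qed

lemma corthonormal_card_le:
  fixes B :: "(complex^'n) set"
  assumes "corthonormal B"
  shows "finite B" "card B \<le> CARD('n)"
proof -
  have "finite B \<and> card B \<le> vec.dim B"
    by (rule vec.independent_bound_general[OF corthonormal_independent[OF assms]])
  moreover have "vec.dim B \<le> CARD('n)"
    using vec.dim_subset[of B UNIV] vec_dim_card[where 'a = complex and 'n = 'n] by simp
  ultimately show "finite B" "card B \<le> CARD('n)"
    by simp_all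
qed

lemma corthonormal_ex_orthogonal:
  fixes B :: "(complex^'n) set"
  assumes B: "corthonormal B" and card: "card B < CARD('n)"
  shows "\<exists>y. y \<noteq> 0 \<and> (\<forall>b\<in>B. cinner b y = 0)"
proof -
  have dim: "vec.dim (vec.span B) = card B"
    using vec.dim_span_eq_card_independent[OF corthonormal_independent[OF B]] .
  have "vec.span B \<noteq> UNIV"
  proof
    assume "vec.span B = UNIV"
    then have "vec.dim (UNIV :: (complex^'n) set) = card B"
      using dim by (simp only:)
    then show False
      using card vec_dim_card[where 'a = complex and 'n = 'n] by simp
  qed
  then obtain x where x: "x \<notin> vec.span B"
    by blast
  define y where "y = x - (\<Sum>b\<in>B. cinner b x *s b)"
  have "(\<Sum>b\<in>B. cinner b x *s b) \<in> vec.span B"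
    by (intro vec.span_sum vec.span_scale vec.span_base)
  then have "y \<noteq> 0"
    using x by (auto simp: y_def)
  moreover have "cinner b' y = 0" if "b' \<in> B" for b'
  proof -
    have "(\<Sum>b\<in>B. cinner b' (cinner b x *s b)) = (\<Sum>b\<in>B. if b = b' then cinner b' x else 0)"
      using B that unfolding corthonormal_def by (auto simp: cinner_scale_right intro!: sum.cong)
    then show ?thesis
      using that corthonormal_card_le(1)[OF B] by (simp add: y_def cinner_diff_right cinner_sum_right)
  qed
  ultimately show ?thesis
    by blast
qed

lemma cunitary_cinner_eigenvector_mult_eq_0:
  assumes U: "cunitary U" and b: "U *v b = l *s b" and y: "cinner b y = 0"
  shows "cinner b (U *v y) = 0"
proof -
  define w where "w = cadjoint U *v b"
  have bw: "b = l *s w"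
    unfolding w_def using U b
    by (metis cunitary_def matrix_vector_mul_assoc matrix_vector_mul_lid vector_scalar_commute)
  have "cnj l * cinner w y = 0"
    using y unfolding bw by (simp add: cinner_scale_left)
  show ?thesis
  proof (cases "l = 0")
    case True
    then show ?thesis
      by (simp add: bw cinner_def)
  next
    case False
    then show ?thesis
      using \<open>cnj l * cinner w y = 0\<close> by (simp add: cinner_mult_vec_right flip: w_def)
  qed
qed

definition poly_mat_vec :: "complex^'n^'n \<Rightarrow> complex poly \<Rightarrow> complex^'n \<Rightarrow> complex^'n" where
  "poly_mat_vec U p v = (\<Sum>i\<le>degree p. coeff p i *s (mpow U i *v v))"

lemma poly_mat_vec_eq_sum:
  "degree p \<le> n \<Longrightarrow> poly_mat_vec U p v = (\<Sum>i\<le>n. coeff p i *s (mpow U i *v v))"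
  unfolding poly_mat_vec_def by (rule sum.mono_neutral_left) (auto simp: coeff_eq_0)

lemma poly_mat_vec_add: "poly_mat_vec U (p + q) v = poly_mat_vec U p v + poly_mat_vec U q v"
proof -
  define n where "n = max (degree p) (degree q)"
  have "degree (p + q) \<le> n"
    unfolding n_def by (rule degree_add_le_max)
  then show ?thesis
    by (simp add: poly_mat_vec_eq_sum[of _ n] n_def coeff_add vector_sadd_rdistrib sum.distrib)
qed

lemma poly_mat_vec_smult: "poly_mat_vec U (smult c p) v = c *s poly_mat_vec U p v"
  using degree_smult_le[of c p]
  by (simp add: poly_mat_vec_eq_sum[of _ "degree p"] vec.scale_sum_right vector_smult_assoc)

lemma poly_mat_vec_diff: "poly_mat_vec U (p - q) v = poly_mat_vec U p v - poly_mat_vec U q v"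
proof -
  have "p - q = p + smult (- 1) q"
    by simp
  then show ?thesis
    by (simp only: poly_mat_vec_add poly_mat_vec_smult) (simp add: vec.scale_minus_left)
qed

lemma poly_mat_vec_pCons_0: "poly_mat_vec U (pCons 0 p) v = U *v poly_mat_vec U p v"
proof -
  have "poly_mat_vec U (pCons 0 p) v
      = (\<Sum>i\<le>Suc (degree p). coeff (pCons 0 p) i *s (mpow U i *v v))"
    by (rule poly_mat_vec_eq_sum[OF degree_pCons_le])
  also have "\<dots> = (\<Sum>i\<le>degree p. coeff p i *s (mpow U (Suc i) *v v))"
    by (subst sum.atMost_Suc_shift) simp
  also have "\<dots> = U *v poly_mat_vec U p v"
    by (simp add: poly_mat_vec_def vec.sum vector_scalar_commute matrix_vector_mul_assoc)
  finally show ?thesis .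
qed

lemma poly_mat_vec_const: "poly_mat_vec U [:c:] v = c *s v"
  by (simp add: poly_mat_vec_def)

lemma poly_mat_vec_linear_factor:
  "poly_mat_vec U ([:- z, 1:] * q) v = U *v poly_mat_vec U q v - z *s poly_mat_vec U q v"
proof -
  have "[:- z, 1:] * q = pCons 0 q - smult z q"
    by simp
  then show ?thesis
    by (simp add: poly_mat_vec_diff poly_mat_vec_smult poly_mat_vec_pCons_0)
qed

lemma ex_nontrivial_lincomb_eq_0:
  fixes f :: "nat \<Rightarrow> complex^'n"
  shows "\<exists>c. (\<exists>i\<le>CARD('n). c i \<noteq> 0) \<and> (\<Sum>i\<le>CARD('n). c i *s f i) = 0"
proof (cases "inj_on f {..CARD('n)}")
  case True
  define K where "K = f ` {..CARD('n)}"
  have "vec.dim K \<le> CARD('n)"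
    using vec.dim_subset[of K UNIV] vec_dim_card[where 'a = complex and 'n = 'n] by simp
  also have "\<dots> < card K"
    using True by (simp add: K_def card_image)
  finally have "vec.dependent K"
    by (intro vec.dependent_biggerset_general)
  then obtain u where u: "\<exists>v\<in>K. u v \<noteq> 0" "(\<Sum>v\<in>K. u v *s v) = 0"
    using vec.dependent_finite[of K] by (auto simp: K_def)
  have "(\<Sum>i\<le>CARD('n). u (f i) *s f i) = 0"
    using u(2) sum.reindex[OF True, of "\<lambda>v. u v *s v"] by (simp add: K_def)
  moreover have "\<exists>i\<le>CARD('n). u (f i) \<noteq> 0"
    using u(1) by (auto simp: K_def)
  ultimately show ?thesis
    by (intro exI[of _ "\<lambda>i. u (f i)"]) simp
next
  case False
  then obtain i j where ij: "i \<le> CARD('n)" "j \<le> CARD('n)" "i \<noteq> j" "f i = f j"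
    unfolding inj_on_def by auto
  define c :: "nat \<Rightarrow> complex" where "c k = (if k = i then 1 else 0) - (if k = j then 1 else 0)" for k
  have "(\<Sum>k\<le>CARD('n). c k *s f k)
      = (\<Sum>k\<le>CARD('n). (if k = i then f k else 0) - (if k = j then f k else 0))"
    by (rule sum.cong) (simp_all add: c_def vector_sub_rdistrib)
  also have "\<dots> = 0"
    using ij by (simp add: sum_subtractf)
  finally show ?thesis
    using ij by (intro exI[of _ c]) (auto simp: c_def)
qed

lemma ex_poly_mat_vec_eq_0:
  fixes U :: "complex^'n^'n"
  shows "\<exists>p. p \<noteq> 0 \<and> poly_mat_vec U p y = 0"
proof -
  obtain c where c: "\<exists>i\<le>CARD('n). c i \<noteq> 0" "(\<Sum>i\<le>CARD('n). c i *s (mpow U i *v y)) = 0"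
    using ex_nontrivial_lincomb_eq_0[of "\<lambda>i. mpow U i *v y"] by blast
  define p where "p = (\<Sum>i\<le>CARD('n). monom (c i) i)"
  have coeff_p: "coeff p k = (if k \<le> CARD('n) then c k else 0)" for k
    by (simp add: p_def coeff_sum coeff_monom)
  have "degree p \<le> CARD('n)"
    by (rule degree_le) (simp add: coeff_p)
  then have "poly_mat_vec U p y = 0"
    using c(2) by (simp add: poly_mat_vec_eq_sum coeff_p)
  moreover have "p \<noteq> 0"
  proof
    assume "p = 0"
    then have "c i = 0" if "i \<le> CARD('n)" for i
      using coeff_p[of i] that by simp
    then show False
      using c(1) by blast
  qed
  ultimately show ?thesis
    by blast
qed

lemma ex_eigenvector_poly_mat_vec:
  assumes "y \<noteq> 0" "p \<noteq> 0" "poly_mat_vec U p y = 0"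
  shows "\<exists>q l. poly_mat_vec U q y \<noteq> 0 \<and> U *v poly_mat_vec U q y = l *s poly_mat_vec U q y"
  using assms(2,3)
proof (induction "degree p" arbitrary: p rule: less_induct)
  case less
  show ?case
  proof (cases "degree p = 0")
    case True
    then obtain c where "p = [:c:]"
      by (metis degree_eq_zeroE)
    then show ?thesis
      using less.prems assms(1) by (simp add: poly_mat_vec_const)
  next
    case False
    then have "\<not> constant (poly p)"
      by (simp add: constant_degree)
    then obtain z where "poly p z = 0"
      using fundamental_theorem_of_algebra by blast
    then have "[:- z, 1:] dvd p"
      by (simp add: poly_eq_0_iff_dvd)
    then obtain q where pq: "p = [:- z, 1:] * q"
      by (rule dvdE)
    with less.prems have "q \<noteq> 0"
      by auto
    then have "degree p = degree [:- z, 1:] + degree q"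
      unfolding pq by (intro degree_mult_eq) auto
    then have "degree q < degree p"
      by simp
    have "U *v poly_mat_vec U q y - z *s poly_mat_vec U q y = 0"
      using less.prems(2) unfolding pq poly_mat_vec_linear_factor .
    then have eigen: "U *v poly_mat_vec U q y = z *s poly_mat_vec U q y"
      by simp
    show ?thesis
    proof (cases "poly_mat_vec U q y = 0")
      case True
      then show ?thesis
        using less.hyps[OF \<open>degree q < degree p\<close> \<open>q \<noteq> 0\<close>] by blast
    next
      case False
      then show ?thesis
        using eigen by blast
    qed
  qed
qed

lemma cinner_eigenvector_poly_mat_vec_eq_0:
  assumes "cunitary U" "U *v b = l *s b" "cinner b y = 0"
  shows "cinner b (poly_mat_vec U q y) = 0"
proof -
  have "cinner b (mpow U i *v y) = 0" for i
  proof (induction i)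
    case (Suc i)
    then show ?case
      using cunitary_cinner_eigenvector_mult_eq_0[OF assms(1,2)]
      by (simp add: matrix_vector_mul_assoc[symmetric])
  qed (use assms(3) in simp)
  then show ?thesis
    by (simp add: poly_mat_vec_def cinner_sum_right cinner_scale_right)
qed

lemma ex_eigenvector_orthogonal:
  fixes B :: "(complex^'n) set"
  assumes U: "cunitary U" and B: "corthonormal B" "\<forall>b\<in>B. \<exists>l. U *v b = l *s b"
    and card: "card B < CARD('n)"
  shows "\<exists>w l. cinner w w = 1 \<and> (\<forall>b\<in>B. cinner b w = 0) \<and> U *v w = l *s w"
proof -
  obtain y where y: "y \<noteq> 0" "\<forall>b\<in>B. cinner b y = 0"
    using corthonormal_ex_orthogonal[OF B(1) card] by blast
  obtain p where "p \<noteq> 0" "poly_mat_vec U p y = 0"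
    using ex_poly_mat_vec_eq_0 by blast
  then obtain q l where v: "poly_mat_vec U q y \<noteq> 0"
    "U *v poly_mat_vec U q y = l *s poly_mat_vec U q y"
    using ex_eigenvector_poly_mat_vec[OF y(1)] by blast
  obtain c where c: "cinner (c *s poly_mat_vec U q y) (c *s poly_mat_vec U q y) = 1"
    using ex_scale_cinner_self_eq_1[OF v(1)] by blast
  have "cinner b (poly_mat_vec U q y) = 0" if b: "b \<in> B" for b
  proof -
    obtain l' where "U *v b = l' *s b"
      using B(2) b by blast
    then show ?thesis
      using cinner_eigenvector_poly_mat_vec_eq_0[OF U] y(2) b by blast
  qed
  then have "\<forall>b\<in>B. cinner b (c *s poly_mat_vec U q y) = 0"
    by (simp add: cinner_scale_right)
  moreover have "U *v (c *s poly_mat_vec U q y) = l *s (c *s poly_mat_vec U q y)"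
    using v(2) by (simp add: vector_scalar_commute vector_smult_assoc mult.commute)
  ultimately show ?thesis
    using c by blast
qed

lemma ex_corthonormal_eigenbasis:
  fixes U :: "complex^'n^'n"
  assumes U: "cunitary U"
  shows "\<exists>B. corthonormal B \<and> (\<forall>b\<in>B. \<exists>l. U *v b = l *s b) \<and> card B = CARD('n)"
proof -
  define P where "P B \<longleftrightarrow> corthonormal B \<and> (\<forall>b\<in>B. \<exists>l. U *v b = l *s b)" for B
  have "P {}"
    by (simp add: P_def corthonormal_def)
  moreover have "\<forall>B. P B \<longrightarrow> card B < CARD('n) + 1"
    using corthonormal_card_le by (fastforce simp: P_def)
  ultimately obtain B where B: "P B" and max: "\<And>B'. P B' \<Longrightarrow> card B' \<le> card B"
    using ex_has_greatest_nat[of P "{}" card "CARD('n) + 1"] by blast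
  have "card B = CARD('n)"
  proof (rule ccontr)
    assume "card B \<noteq> CARD('n)"
    with B have "card B < CARD('n)"
      using corthonormal_card_le(2) by (fastforce simp: P_def)
    moreover have "corthonormal B" "\<forall>b\<in>B. \<exists>l. U *v b = l *s b"
      using B by (simp_all add: P_def)
    ultimately obtain w l where w: "cinner w w = 1" "\<forall>b\<in>B. cinner b w = 0" "U *v w = l *s w"
      using ex_eigenvector_orthogonal[OF U] by blast
    then have "w \<notin> B"
      by auto
    moreover have "cinner w b = 0" if "b \<in> B" for b
      using w(2) that cinner_commute[of w b] by simp
    then have "P (insert w B)"
      using B w unfolding P_def corthonormal_def by auto
    moreover have "finite B"
      using B corthonormal_card_le(1) unfolding P_def by blast
    ultimately show False
      using max[of "insert w B"] by simp
  qed
  then show ?thesis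
    using B unfolding P_def by blast
qed

lemma unitary_diagonalization:
  fixes U :: "complex^'n^'n"
  assumes U: "cunitary U"
  shows "\<exists>W a. cunitary W \<and> U = W ** diagm a ** cadjoint W"
proof -
  obtain B where B: "corthonormal B" "\<forall>b\<in>B. \<exists>l. U *v b = l *s b" "card B = CARD('n)"
    using ex_corthonormal_eigenbasis[OF U] by blast
  then obtain g where g: "bij_betw g (UNIV :: 'n set) B"
    using finite_same_card_bij[of "UNIV :: 'n set" B] corthonormal_card_le(1)[OF B(1)] by auto
  then have gB: "g i \<in> B" and g_eq_iff: "g i = g j \<longleftrightarrow> i = j" for i j
    by (auto simp: bij_betw_def inj_on_def)
  define W :: "complex^'n^'n" where "W = (\<chi> i j. g j $ i)"
  have "(cadjoint W ** W) $ i $ j = cinner (g i) (g j)" for i j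
    by (simp add: W_def cadjoint_def matrix_matrix_mult_def cinner_def)
  moreover have "cinner (g i) (g j) = (if i = j then 1 else 0)" for i j
    using B(1) gB[of i] gB[of j] g_eq_iff[of i j] unfolding corthonormal_def by auto
  ultimately have "cadjoint W ** W = mat 1"
    by (simp add: vec_eq_iff mat_def)
  then have W: "cunitary W"
    by (rule cunitaryI_left)
  have "\<forall>j. \<exists>l. U *v g j = l *s g j"
    using B(2) gB by blast
  then obtain a where a: "\<forall>j. U *v g j = a j *s g j"
    by (rule choice[THEN exE])
  have "(U ** W) $ i $ j = (U *v g j) $ i" for i j
    by (simp add: W_def matrix_matrix_mult_def matrix_vector_mult_def)
  then have UW: "U ** W = W ** diagm a"
    using a by (simp add: vec_eq_iff mult_diagm_nth W_def mult.commute)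
  have "U = U ** (W ** cadjoint W)"
    using W by (simp add: cunitary_def)
  also have "\<dots> = W ** diagm a ** cadjoint W"
    by (simp add: matrix_mul_assoc UW)
  finally have "U = W ** diagm a ** cadjoint W" .
  with W show ?thesis
    by blast
qed

lemma unitary_eq_conj_diagm_exp:
  fixes U :: "complex^'n^'n"
  assumes U: "cunitary U"
  shows "\<exists>W t. cunitary W \<and> (\<forall>i. \<bar>t i\<bar> \<le> pi)
    \<and> U = W ** diagm (\<lambda>i. exp (\<i> * of_real (t i))) ** cadjoint W"
proof -
  obtain W a where W: "cunitary W" and UW: "U = W ** diagm a ** cadjoint W"
    using unitary_diagonalization[OF U] by blast
  have "diagm a = cadjoint W ** U ** W"
    using W by (simp add: UW cunitary_def matrix_mul_assoc) (simp flip: matrix_mul_assoc)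
  then have "cunitary (diagm a)"
    by (simp add: cunitary_mult cunitary_cadjoint W U)
  then have "a i = exp (\<i> * of_real (Arg (a i)))" for i
    using complex_norm_eq_1_exp_eq by (simp add: cunitary_diagm_iff)
  then have "U = W ** diagm (\<lambda>i. exp (\<i> * of_real (Arg (a i)))) ** cadjoint W"
    by (simp add: UW flip: fun_eq_iff)
  moreover have "\<bar>Arg (a i)\<bar> \<le> pi" for i
    using Arg_bounded[of "a i"] by auto
  ultimately show ?thesis
    using W by (intro exI[of _ W] exI[of _ "\<lambda>i. Arg (a i)"]) simp
qed

section \<open>The exponential of a diagonalised matrix\<close>

lemma sums_vecI:
  fixes f :: "nat \<Rightarrow> 'a::real_normed_vector^'n"
  assumes "\<And>i. (\<lambda>k. f k $ i) sums (l $ i)"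
  shows "f sums l"
proof -
  have "(\<lambda>n. \<chi> i. \<Sum>k<n. f k $ i) \<longlonglongrightarrow> (\<chi> i. l $ i)"
    using assms unfolding sums_def by (intro tendsto_vec_lambda) auto
  moreover have "(\<lambda>n. \<chi> i. \<Sum>k<n. f k $ i) = (\<lambda>n. \<Sum>k<n. f k)"
    by (simp add: fun_eq_iff vec_eq_iff sum_component)
  ultimately show ?thesis
    unfolding sums_def by simp
qed

lemma mpow_diagm: "mpow (diagm a) k = diagm (\<lambda>i. a i ^ k)"
  by (induction k) (simp_all add: diagm_1 diagm_mult_diagm)

lemma mpow_conj:
  assumes W: "cunitary W"
  shows "mpow (W ** D ** cadjoint W) k = W ** mpow D k ** cadjoint W"
proof (induction k)
  case 0
  then show ?case
    using W by (simp add: cunitary_def)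
next
  case (Suc k)
  have "mpow (W ** D ** cadjoint W) (Suc k) = W ** D ** (cadjoint W ** W) ** mpow D k ** cadjoint W"
    using Suc by (simp add: matrix_mul_assoc)
  also have "\<dots> = W ** mpow D (Suc k) ** cadjoint W"
    using W by (simp add: cunitary_def matrix_mul_assoc)
  finally show ?case .
qed

lemma mexp_conj_diagm:
  assumes W: "cunitary W"
  shows "mexp (W ** diagm a ** cadjoint W) = W ** diagm (\<lambda>i. exp (a i)) ** cadjoint W"
proof -
  have "(\<lambda>k. (1 / fact k) *\<^sub>R mpow (W ** diagm a ** cadjoint W) k)
      sums (W ** diagm (\<lambda>i. exp (a i)) ** cadjoint W)"
  proof (intro sums_vecI)
    fix i j
    have "((1 / fact k) *\<^sub>R mpow (W ** diagm a ** cadjoint W) k) $ i $ j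
        = (\<Sum>l\<in>UNIV. W $ i $ l * cnj (W $ j $ l) * (a l ^ k /\<^sub>R fact k))" for k
      by (simp only: vector_scaleR_component mpow_conj[OF W] mpow_diagm conj_diagm_nth)
        (simp add: scaleR_sum_right scaleR_conv_of_real ac_simps divide_inverse sum_distrib_left)
    moreover have "(\<lambda>k. \<Sum>l\<in>UNIV. W $ i $ l * cnj (W $ j $ l) * (a l ^ k /\<^sub>R fact k))
        sums (\<Sum>l\<in>UNIV. W $ i $ l * cnj (W $ j $ l) * exp (a l))"
      by (intro sums_sum sums_mult exp_converges)
    ultimately show "(\<lambda>k. ((1 / fact k) *\<^sub>R mpow (W ** diagm a ** cadjoint W) k) $ i $ j)
        sums ((W ** diagm (\<lambda>i. exp (a i)) ** cadjoint W) $ i $ j)"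
      by (simp add: conj_diagm_nth)
  qed
  then show ?thesis
    unfolding mexp_def by (rule sums_unique[symmetric])
qed

theorem mainTheorem6:
  fixes U :: "complex^'n^'n"
  assumes "cunitary U"
  shows "\<exists>H :: complex^'n^'n. \<exists>\<phi> :: real.
           chermitian H \<and> trace H = 0 \<and>
           mexp (cmat_smult (- \<i>) H) = cmat_smult (exp (\<i> * complex_of_real \<phi>)) U \<and>
           (\<forall>N. unitarily_invariant_norm N \<longrightarrow> N H \<le> pi * N (mat 1 - U))"
proof -
  obtain W t where W: "cunitary W" and t: "\<forall>i. \<bar>t i\<bar> \<le> pi"
    and U: "U = W ** diagm (\<lambda>i. exp (\<i> * of_real (t i))) ** cadjoint W"
    using unitary_eq_conj_diagm_exp[OF assms] by blast
  define m where "m = (\<Sum>j\<in>UNIV. t j) / CARD('n)"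
  define H where "H = W ** diagm (\<lambda>i. of_real (m - t i)) ** cadjoint W"
  have "chermitian H"
    unfolding H_def by (rule chermitian_conj_diagm_real)
  moreover have "trace H = 0"
    by (simp add: H_def trace_conj_diagm[OF W] m_def sum_subtractf flip: of_real_sum)
  moreover have "mexp (cmat_smult (- \<i>) H) = cmat_smult (exp (\<i> * of_real (- m))) U"
    by (simp add: H_def U cmat_smult_conj_diagm mexp_conj_diagm[OF W] algebra_simps
        flip: exp_add)
  moreover have "N H \<le> pi * N (mat 1 - U)" if "unitarily_invariant_norm N" for N
    unfolding H_def m_def U using uinorm_conj_centered_angles_le[OF that W] t by blast
  ultimately show ?thesis
    by blast
qed

end
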